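(* Let $Q\subseteq\mathbb R[\mathbf X]$ be a quadratic module. Then $\mathcal L(Q)=\mathcal L\big(\sqrt[\mathbb R]{\operatorname{supp}Q}+Q\big)$. In particular, for every ideal $I\subseteq\sqrt[\mathbb R]{\operatorname{supp}Q}$, $\mathcal L(Q)=\mathcal L\big(\sqrt[\mathbb R]{I}+Q\big)$.
   Context: $\mathbb R[\mathbf X]=\mathbb R[X_1,\dots,X_n]$, $\Sigma^2$ sums of squares. A quadratic module is a set $Q$ with $1\in Q$, $Q+Q\subseteq Q$, $\Sigma^2Q\subseteq Q$; $\operatorname{supp}Q=Q\cap(-Q)$ is an ideal; for an ideal $I$, $I+Q$ is again a quadratic module. For a quadratic module $A$, $\mathcal L(A)=\{\sigma\in\mathbb R[\mathbf X]^*:\sigma(a)\ge0\ \forall a\in A\}$. $\sqrt[\mathbb R]{I}=\{p:\exists m\in\mathbb N, s\in\Sigma^2,\ p^{2m}+s\in I\}$. *)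

theory Defs
  imports Complex_Main "HOL-Library.Poly_Mapping"
begin

text \<open>Real polynomials in finitely many variables indexed by the finite type 'n:
  maps from monomials (exponent vectors) to real coefficients.\<close>
type_synonym 'n rpoly = "('n \<Rightarrow>\<^sub>0 nat) \<Rightarrow>\<^sub>0 real"

definition const_poly :: "real \<Rightarrow> 'n rpoly" where
  "const_poly c = Poly_Mapping.single 0 c"

definition sos :: "'n rpoly set" where
  "sos = {s. \<exists>fs. s = sum_list (map (\<lambda>f. f ^ 2) fs)}"

definition quadratic_module :: "'n rpoly set \<Rightarrow> bool" where
  "quadratic_module Q \<longleftrightarrow> 1 \<in> Q \<and> (\<forall>a\<in>Q. \<forall>b\<in>Q. a + b \<in> Q) \<and> (\<forall>s\<in>sos. \<forall>q\<in>Q. s * q \<in> Q)"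

definition supp :: "'n rpoly set \<Rightarrow> 'n rpoly set" where
  "supp Q = Q \<inter> uminus ` Q"

definition is_ideal :: "'n rpoly set \<Rightarrow> bool" where
  "is_ideal I \<longleftrightarrow> 0 \<in> I \<and> (\<forall>a\<in>I. \<forall>b\<in>I. a + b \<in> I) \<and> (\<forall>p. \<forall>a\<in>I. p * a \<in> I)"

definition real_radical :: "'n rpoly set \<Rightarrow> 'n rpoly set" where
  "real_radical I = {p. \<exists>(m::nat) s. s \<in> sos \<and> p ^ (2 * m) + s \<in> I}"

definition set_plus :: "'n rpoly set \<Rightarrow> 'n rpoly set \<Rightarrow> 'n rpoly set" where
  "set_plus I Q = {i + q | i q. i \<in> I \<and> q \<in> Q}"

definition lin_functional :: "('n rpoly \<Rightarrow> real) \<Rightarrow> bool" where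
  "lin_functional \<sigma> \<longleftrightarrow> (\<forall>p q. \<sigma> (p + q) = \<sigma> p + \<sigma> q) \<and> (\<forall>c p. \<sigma> (const_poly c * p) = c * \<sigma> p)"

definition Lfun :: "'n rpoly set \<Rightarrow> ('n rpoly \<Rightarrow> real) set" where
  "Lfun A = {\<sigma>. lin_functional \<sigma> \<and> (\<forall>a\<in>A. \<sigma> a \<ge> 0)}"

end

theory Submission
  imports Defs
begin

text \<open>A positive functional \<sigma> on Q satisfies the Cauchy--Schwarz inequality
  \<sigma>(fg)^2 \<le> \<sigma>(f^2) \<sigma>(g^2), since all squares lie in Q. Hence \<sigma>(f^2) = 0 forces \<sigma> to
  vanish on the whole ideal generated by f, and halving exponents shows that
  \<sigma>(p^(2m) + s) = 0 with s a sum of squares already forces \<sigma>(p) = 0. Since \<sigma>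
  vanishes on supp Q, it therefore vanishes on the real radical of supp Q and of
  every ideal inside it, and adding a set on which all of L(Q) vanishes to Q does
  not change L(Q).\<close>

lemma lin_functional_zero:
  assumes "lin_functional \<sigma>"
  shows "\<sigma> 0 = 0"
  using assms unfolding lin_functional_def by (metis add.right_neutral add_cancel_right_right)

lemma lin_functional_uminus:
  assumes "lin_functional \<sigma>"
  shows "\<sigma> (- p) = - \<sigma> p"
  using assms lin_functional_zero[OF assms] unfolding lin_functional_def
  by (metis add.right_inverse add_eq_0_iff)

lemma square_in_sos: "f ^ 2 \<in> sos"
  unfolding sos_def by (rule CollectI, rule exI[of _ "[f]"], simp)

lemma zero_in_sos: "0 \<in> sos"
  unfolding sos_def by (rule CollectI, rule exI[of _ "[]"], simp)

lemma sos_subset_quadratic_module: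
  assumes "quadratic_module Q"
  shows "sos \<subseteq> Q"
  using assms unfolding quadratic_module_def by (metis mult.right_neutral subsetI)

lemma Lfun_nonneg_sos:
  assumes "quadratic_module Q" "\<sigma> \<in> Lfun Q" "s \<in> sos"
  shows "\<sigma> s \<ge> 0"
  using assms sos_subset_quadratic_module[OF assms(1)] unfolding Lfun_def by blast

lemma nonneg_quadratic_linear_coeff_eq_0:
  fixes a b :: real
  assumes "\<And>t. 0 \<le> a * t\<^sup>2 + 2 * b * t"
  shows "b = 0"
proof -
  have "a \<ge> 0" using assms[of 1] assms[of "-1"] by simp
  define t where "t = - b / (a + 1)"
  have "t * (a + 1) = - b" using \<open>a \<ge> 0\<close> unfolding t_def by simp
  have "(a + 1)\<^sup>2 * (a * t\<^sup>2 + 2 * b * t) = a * (t * (a + 1))\<^sup>2 + 2 * b * (t * (a + 1)) * (a + 1)"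
    by (simp add: power2_eq_square algebra_simps)
  also have "\<dots> = - b\<^sup>2 * (a + 2)"
    unfolding \<open>t * (a + 1) = - b\<close> by (simp add: power2_eq_square algebra_simps)
  finally have "b\<^sup>2 * (a + 2) \<le> 0"
    using assms[of t] by (metis neg_0_le_iff_le mult_minus_left zero_le_mult_iff zero_le_power2)
  then show "b = 0" using \<open>a \<ge> 0\<close> by (simp add: mult_le_0_iff)
qed

lemma Lfun_square_eq_0_imp_mult_eq_0:
  assumes Q: "quadratic_module Q" and \<sigma>: "\<sigma> \<in> Lfun Q" and f: "\<sigma> (f ^ 2) = 0"
  shows "\<sigma> (f * g) = 0"
proof (rule nonneg_quadratic_linear_coeff_eq_0)
  fix t
  have add: "\<And>p q. \<sigma> (p + q) = \<sigma> p + \<sigma> q"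
    and smult: "\<And>c p. \<sigma> (const_poly c * p) = c * \<sigma> p"
    using \<sigma> unfolding Lfun_def lin_functional_def by blast+
  have "(f + const_poly t * g) ^ 2 = f ^ 2 + const_poly t * (f * g) + const_poly t * (f * g)
      + const_poly t * (const_poly t * g ^ 2)"
    by (simp add: power2_eq_square algebra_simps)
  then have "\<sigma> ((f + const_poly t * g) ^ 2) = \<sigma> (g ^ 2) * t\<^sup>2 + 2 * \<sigma> (f * g) * t"
    by (simp only: add smult f) (simp add: power2_eq_square algebra_simps)
  then show "0 \<le> \<sigma> (g ^ 2) * t\<^sup>2 + 2 * \<sigma> (f * g) * t"
    using Lfun_nonneg_sos[OF Q \<sigma> square_in_sos] by metis
qed

lemma Lfun_annihilates_power_imp_eq_0:
  assumes Q: "quadratic_module Q" and \<sigma>: "\<sigma> \<in> Lfun Q"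
    and ann: "\<And>g. \<sigma> (p ^ j * g) = 0"
  shows "\<sigma> p = 0"
  using ann
proof (induction j rule: less_induct)
  case (less j)
  show ?case
  proof (cases "j \<le> 1")
    case True
    then show ?thesis using less.prems[of p] less.prems[of 1] by (cases j) auto
  next
    case False
    define k where "k = (j + 1) div 2"
    have "k < j" and "j \<le> 2 * k" using False unfolding k_def by auto
    then have "(p ^ k) ^ 2 = p ^ j * p ^ (2 * k - j)"
      by (simp add: power_mult[symmetric] power_add[symmetric] mult.commute)
    then have "\<sigma> ((p ^ k) ^ 2) = 0" using less.prems by simp
    then show ?thesis
      using less.IH[OF \<open>k < j\<close>] Lfun_square_eq_0_imp_mult_eq_0[OF Q \<sigma>] by blast
  qed
qed

lemma Lfun_vanishes_on_supp:
  assumes "\<sigma> \<in> Lfun Q" "x \<in> supp Q"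
  shows "\<sigma> x = 0"
proof -
  have lin: "lin_functional \<sigma>" and pos: "\<And>a. a \<in> Q \<Longrightarrow> \<sigma> a \<ge> 0"
    using assms(1) unfolding Lfun_def by auto
  have "x \<in> Q" "- x \<in> Q" using assms(2) unfolding supp_def by auto
  then show ?thesis using pos[of x] pos[of "- x"] lin_functional_uminus[OF lin, of x] by linarith
qed

lemma Lfun_vanishes_on_real_radical:
  assumes Q: "quadratic_module Q" and \<sigma>: "\<sigma> \<in> Lfun Q"
    and vanish: "\<And>x. x \<in> I \<Longrightarrow> \<sigma> x = 0" and p: "p \<in> real_radical I"
  shows "\<sigma> p = 0"
proof -
  have lin: "lin_functional \<sigma>" using \<sigma> unfolding Lfun_def by blast
  obtain m s where s: "s \<in> sos" and ms: "p ^ (2 * m) + s \<in> I"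
    using p unfolding real_radical_def by blast
  have "\<sigma> ((p ^ m) ^ 2) + \<sigma> s = 0"
    using vanish[OF ms] lin unfolding lin_functional_def by (simp add: power_mult mult.commute)
  then have "\<sigma> ((p ^ m) ^ 2) = 0"
    using Lfun_nonneg_sos[OF Q \<sigma> s] Lfun_nonneg_sos[OF Q \<sigma> square_in_sos, of "p ^ m"] by linarith
  then have "\<sigma> (p ^ m * g) = 0" for g
    by (rule Lfun_square_eq_0_imp_mult_eq_0[OF Q \<sigma>])
  then show ?thesis
    by (rule Lfun_annihilates_power_imp_eq_0[OF Q \<sigma>])
qed

lemma zero_in_real_radical:
  assumes "0 \<in> I"
  shows "0 \<in> real_radical I"
proof -
  have "0 ^ (2 * 1) + 0 \<in> I" using assms by simp
  then show ?thesis using zero_in_sos unfolding real_radical_def by blast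
qed

lemma Lfun_set_plus_eq:
  assumes "0 \<in> R" and vanish: "\<And>\<sigma> r. \<sigma> \<in> Lfun Q \<Longrightarrow> r \<in> R \<Longrightarrow> \<sigma> r = 0"
  shows "Lfun Q = Lfun (set_plus R Q)"
proof (rule equalityI)
  show "Lfun Q \<subseteq> Lfun (set_plus R Q)"
  proof
    fix \<sigma> assume \<sigma>: "\<sigma> \<in> Lfun Q"
    then have "\<sigma> (r + q) \<ge> 0" if "r \<in> R" "q \<in> Q" for r q
      using vanish[OF \<sigma> that(1)] that(2) unfolding Lfun_def lin_functional_def by auto
    then show "\<sigma> \<in> Lfun (set_plus R Q)" using \<sigma> unfolding Lfun_def set_plus_def by blast
  qed
  have "Q \<subseteq> set_plus R Q" using \<open>0 \<in> R\<close> unfolding set_plus_def by force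
  then show "Lfun (set_plus R Q) \<subseteq> Lfun Q" unfolding Lfun_def by blast
qed

theorem mainTheorem16:
  fixes Q :: "('n::finite) rpoly set"
  assumes "quadratic_module Q"
  shows "Lfun Q = Lfun (set_plus (real_radical (supp Q)) Q)
    \<and> (\<forall>I. is_ideal I \<and> I \<subseteq> real_radical (supp Q) \<longrightarrow> Lfun Q = Lfun (set_plus (real_radical I) Q))"
proof (intro conjI allI impI)
  have "0 \<in> supp Q"
    using sos_subset_quadratic_module[OF assms] zero_in_sos unfolding supp_def by force
  have vanish_rad_supp: "\<sigma> r = 0" if "\<sigma> \<in> Lfun Q" "r \<in> real_radical (supp Q)" for \<sigma> r
    using Lfun_vanishes_on_real_radical[OF assms] Lfun_vanishes_on_supp that by blast
  show "Lfun Q = Lfun (set_plus (real_radical (supp Q)) Q)"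
    using Lfun_set_plus_eq zero_in_real_radical[OF \<open>0 \<in> supp Q\<close>] vanish_rad_supp by blast
  fix I
  assume I: "is_ideal I \<and> I \<subseteq> real_radical (supp Q)"
  then have "0 \<in> real_radical I" using zero_in_real_radical unfolding is_ideal_def by blast
  moreover have "\<sigma> r = 0" if "\<sigma> \<in> Lfun Q" "r \<in> real_radical I" for \<sigma> r
    using Lfun_vanishes_on_real_radical[OF assms] vanish_rad_supp I that by blast
  ultimately show "Lfun Q = Lfun (set_plus (real_radical I) Q)"
    by (rule Lfun_set_plus_eq)
qed

end
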